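(* Let $\mathcal{X}$ be finite, $\mathcal{F}\subseteq\mathcal{F}^+\subseteq(\mathcal{X}\to[-1,1])$, $\mathcal{Z}=\mathcal{X}\times[-1,1]$, decision space $\Pi=\mathcal{F}^+$, and consider the regression loss with a base loss $\mathrm{L}:[-1,1]^2\to[0,1]$ that is $1$-Lipschitz in its second argument. Then $N_{\mathsf{frac}}(\mathcal{M}_{\mathsf{agnostic}};\Delta)\le N_{\mathsf{frac}}(\mathcal{F},\mathcal{F}^+;\Delta)$ for all $\Delta>0$. If moreover $\mathrm{L}(y,y')=|y-y'|$ is the absolute loss, then for all $\Delta>0$, $$N_{\mathsf{frac}}(\mathcal{M}_{\mathsf{agnostic}};\Delta)=N_{\mathsf{frac}}(\mathcal{M}_{\mathcal{F},\mathsf{realizable}};\Delta)=N_{\mathsf{frac}}(\mathcal{F},\mathcal{F}^+;\Delta).$$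
   Context: For $M\in\Delta(\mathcal{Z})$ and $f\in\mathcal{F}^+$, the regression loss is $L(M,f)=\mathbb{E}_{(x,y)\sim M}\mathrm{L}(y,f(x))-\min_{f^\star\in\mathcal{F}}\mathbb{E}_{(x,y)\sim M}\mathrm{L}(y,f^\star(x))$ (the minimum is assumed attained). $\mathcal{M}_{\mathsf{agnostic}}=\Delta(\mathcal{Z})$; $\mathcal{M}_{\mathcal{F},\mathsf{realizable}}$ is the set of $M\in\Delta(\mathcal{Z})$ for which there is $f_M\in\mathcal{F}$ with $y=f_M(x)$ almost surely under $M$. For a model class $\mathcal{M}$, $N_{\mathsf{frac}}(\mathcal{M};\Delta)=\inf_{p\in\Delta(\Pi)}\sup_{M\in\mathcal{M}}\frac1{p(\{\pi:L(M,\pi)\le\Delta\})}$, and $N_{\mathsf{frac}}(\mathcal{F},\mathcal{F}^+;\Delta)=\inf_{p\in\Delta(\mathcal{F}^+)}\sup_{\mu\in\Delta(\mathcal{X}),f^\star\in\mathcal{F}}\frac1{p(\{f:\mathbb{E}_{x\sim\mu}|f(x)-f^\star(x)|\le\Delta\})}$. *)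

theory Defs
  imports "HOL-Probability.Probability"
begin

definition Zspace :: "('x \<times> real) measure" where
  "Zspace = count_space UNIV \<Otimes>\<^sub>M restrict_space borel {-1..1::real}"

definition models_agnostic :: "('x \<times> real) measure set" where
  "models_agnostic = {M. prob_space M \<and> sets M = sets Zspace}"

definition models_realizable :: "('x \<Rightarrow> real) set \<Rightarrow> ('x \<times> real) measure set" where
  "models_realizable F = {M \<in> models_agnostic. \<exists>fM\<in>F. AE z in M. snd z = fM (fst z)}"

definition risk :: "(real \<Rightarrow> real \<Rightarrow> real) \<Rightarrow> ('x \<times> real) measure \<Rightarrow> ('x \<Rightarrow> real) \<Rightarrow> real" where
  "risk L M f = (\<integral>z. L (snd z) (f (fst z)) \<partial>M)"

text \<open>Regression loss L(M,f) = risk(M,f) - min over F of risk (the min is assumed attained).\<close>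
definition regloss :: "(real \<Rightarrow> real \<Rightarrow> real) \<Rightarrow> ('x \<Rightarrow> real) set \<Rightarrow> ('x \<times> real) measure \<Rightarrow> ('x \<Rightarrow> real) \<Rightarrow> real" where
  "regloss L F M f = risk L M f - (INF g\<in>F. risk L M g)"

definition min_attained :: "(real \<Rightarrow> real \<Rightarrow> real) \<Rightarrow> ('x \<Rightarrow> real) set \<Rightarrow> bool" where
  "min_attained L F = (\<forall>M\<in>models_agnostic. \<exists>g\<in>F. \<forall>h\<in>F. risk L M g \<le> risk L M h)"

definition decision_dists :: "('x \<Rightarrow> real) set \<Rightarrow> ('x \<Rightarrow> real) measure set" where
  "decision_dists Fp = {p. prob_space p \<and> sets p = sets (restrict_space (Pi\<^sub>M UNIV (\<lambda>_. borel)) Fp)}"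

definition Nfrac_models :: "(real \<Rightarrow> real \<Rightarrow> real) \<Rightarrow> ('x \<Rightarrow> real) set \<Rightarrow> ('x \<Rightarrow> real) set
    \<Rightarrow> ('x \<times> real) measure set \<Rightarrow> real \<Rightarrow> ennreal" where
  "Nfrac_models L F Fp Ms \<Delta> =
     (INF p\<in>decision_dists Fp. SUP M\<in>Ms. 1 / emeasure p {\<pi>\<in>Fp. regloss L F M \<pi> \<le> \<Delta>})"

definition Nfrac_class :: "('x \<Rightarrow> real) set \<Rightarrow> ('x \<Rightarrow> real) set \<Rightarrow> real \<Rightarrow> ennreal" where
  "Nfrac_class F Fp \<Delta> =
     (INF p\<in>decision_dists Fp. SUP (\<mu>, fs)\<in>(UNIV :: 'x pmf set) \<times> F.
        1 / emeasure p {f\<in>Fp. measure_pmf.expectation \<mu> (\<lambda>x. \<bar>f x - fs x\<bar>) \<le> \<Delta>})"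

end

theory Submission
  imports Defs
begin

text \<open>
  Fix a model \<open>M\<close>, let \<open>g \<in> F\<close> minimise its risk and let \<open>\<mu>\<close> be its \<open>x\<close>-marginal.
  Since the loss is 1-Lipschitz in its second argument, the regression loss of any \<open>f\<close> under
  \<open>M\<close> is at most \<open>E\<^sub>\<mu> |f - g|\<close>; so every decision distribution succeeds on \<open>M\<close> at least
  as often as on the pair \<open>(\<mu>, g)\<close>, which gives the first inequality.
  For the absolute loss, conversely, every pair \<open>(\<mu>, f\<^sup>\<star>)\<close> is realised by the model
  \<open>x \<sim> \<mu>, y = f\<^sup>\<star>(x)\<close>, whose regression loss is exactly \<open>E\<^sub>\<mu> |f - f\<^sup>\<star>|\<close>; together with
  the trivial monotonicity in the model class this closes the chain of inequalities.
\<close>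

lemma space_Zspace: "space Zspace = UNIV \<times> {-1..1::real}"
  by (simp add: Zspace_def space_pair_measure)

lemma models_agnosticD:
  assumes "M \<in> models_agnostic"
  shows "prob_space M" and "sets M = sets Zspace" and "space M = UNIV \<times> {-1..1}"
  using assms sets_eq_imp_space_eq[of M Zspace] by (auto simp: models_agnostic_def space_Zspace)

lemma measurable_fst_Zspace: "fst \<in> Zspace \<rightarrow>\<^sub>M count_space UNIV"
  by (simp add: Zspace_def)

lemma measurable_snd_Zspace: "snd \<in> borel_measurable Zspace"
proof -
  have "snd \<in> Zspace \<rightarrow>\<^sub>M restrict_space borel {-1..1::real}"
    by (simp add: Zspace_def)
  then show ?thesis
    using measurable_restrict_space2_iff by blast
qed

lemma measurable_fst_models_agnostic:
  "M \<in> models_agnostic \<Longrightarrow> fst \<in> M \<rightarrow>\<^sub>M count_space UNIV"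
  using measurable_fst_Zspace measurable_cong_sets[OF models_agnosticD(2) refl] by blast

lemma borel_measurable_loss_comp:
  fixes L :: "real \<Rightarrow> real \<Rightarrow> real"
  assumes Lm: "(\<lambda>z. L (fst z) (snd z)) \<in> borel_measurable (restrict_space borel (S \<times> T))"
    and "a \<in> borel_measurable N" and "b \<in> borel_measurable N"
    and "\<And>q. q \<in> space N \<Longrightarrow> a q \<in> S \<and> b q \<in> T"
  shows "(\<lambda>q. L (a q) (b q)) \<in> borel_measurable N"
proof -
  have "(\<lambda>q. (a q, b q)) \<in> N \<rightarrow>\<^sub>M borel"
    using assms(2,3) by (simp flip: borel_prod)
  then have "(\<lambda>q. (a q, b q)) \<in> N \<rightarrow>\<^sub>M restrict_space borel (S \<times> T)"
    using assms(4) by (intro measurable_restrict_space2) auto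
  from measurable_compose[OF this Lm] show ?thesis
    by simp
qed

lemma integrable_risk:
  fixes L :: "real \<Rightarrow> real \<Rightarrow> real"
  assumes Lm: "(\<lambda>z. L (fst z) (snd z)) \<in> borel_measurable (restrict_space borel ({-1..1} \<times> {-1..1}))"
    and Lb: "\<forall>y\<in>{-1..1}. \<forall>y'\<in>{-1..1}. \<bar>L y y'\<bar> \<le> B"
    and f: "\<forall>x. f x \<in> {-1..1}" and M: "M \<in> models_agnostic"
  shows "integrable M (\<lambda>z. L (snd z) (f (fst z)))"
proof -
  interpret prob_space M
    using models_agnosticD(1)[OF M] .
  have "AE z in M. norm (L (snd z) (f (fst z))) \<le> B"
    using Lb f by (intro AE_I2) (auto simp: models_agnosticD(3)[OF M])
  moreover have "(\<lambda>z. L (snd z) (f (fst z))) \<in> borel_measurable Zspace"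
    using measurable_snd_Zspace measurable_compose[OF measurable_fst_Zspace, of f borel] f
    by (intro borel_measurable_loss_comp[OF Lm]) (auto simp: space_Zspace)
  then have "(\<lambda>z. L (snd z) (f (fst z))) \<in> borel_measurable M"
    using measurable_cong_sets[OF models_agnosticD(2)[OF M] refl] by blast
  ultimately show ?thesis
    by (rule integrable_const_bound)
qed

lemma borel_measurable_risk_decision:
  fixes L :: "real \<Rightarrow> real \<Rightarrow> real" and M :: "('x::countable \<times> real) measure"
  assumes Lm: "(\<lambda>z. L (fst z) (snd z)) \<in> borel_measurable (restrict_space borel ({-1..1} \<times> {-1..1}))"
    and Fp: "Fp \<subseteq> {f. \<forall>x. f x \<in> {-1..1}}"
    and M: "M \<in> models_agnostic"
  shows "risk L M \<in> borel_measurable (restrict_space (Pi\<^sub>M UNIV (\<lambda>_. borel)) Fp)"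
proof -
  let ?P = "restrict_space (Pi\<^sub>M UNIV (\<lambda>_. borel)) Fp :: ('x \<Rightarrow> real) measure"
  interpret prob_space M
    using models_agnosticD(1)[OF M] .
  have eval: "(\<lambda>q. fst q (fst (snd q))) \<in> borel_measurable (?P \<Otimes>\<^sub>M M)"
  proof (rule measurable_compose_countable[where f = "\<lambda>x q. fst q x" and g = "\<lambda>q. fst (snd q)"])
    show "(\<lambda>q. fst q x) \<in> borel_measurable (?P \<Otimes>\<^sub>M M)" for x
      by (intro measurable_compose[OF measurable_fst] measurable_restrict_space1
          measurable_component_singleton) simp
    show "(\<lambda>q. fst (snd q)) \<in> ?P \<Otimes>\<^sub>M M \<rightarrow>\<^sub>M count_space UNIV"
      by (rule measurable_compose[OF measurable_snd measurable_fst_models_agnostic[OF M]])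
  qed
  have "(\<lambda>q. L (snd (snd q)) (fst q (fst (snd q)))) \<in> borel_measurable (?P \<Otimes>\<^sub>M M)"
  proof (rule borel_measurable_loss_comp[OF Lm _ eval])
    show "(\<lambda>q. snd (snd q)) \<in> borel_measurable (?P \<Otimes>\<^sub>M M)"
      using measurable_snd_Zspace measurable_cong_sets[OF models_agnosticD(2)[OF M] refl]
      by (intro measurable_compose[OF measurable_snd]) blast
  qed (use Fp in \<open>auto simp: space_pair_measure space_restrict_space models_agnosticD(3)[OF M]\<close>)
  then have "(\<lambda>(\<pi>, z). L (snd z) (\<pi> (fst z))) \<in> borel_measurable (?P \<Otimes>\<^sub>M M)"
    by (simp add: case_prod_beta)
  then show ?thesis
    unfolding risk_def by (rule borel_measurable_lebesgue_integral)
qed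

lemma regloss_sublevel_in_sets:
  fixes L :: "real \<Rightarrow> real \<Rightarrow> real" and M :: "('x::countable \<times> real) measure"
  assumes Lm: "(\<lambda>z. L (fst z) (snd z)) \<in> borel_measurable (restrict_space borel ({-1..1} \<times> {-1..1}))"
    and Fp: "Fp \<subseteq> {f. \<forall>x. f x \<in> {-1..1}}"
    and M: "M \<in> models_agnostic" and p: "p \<in> decision_dists Fp"
  shows "{\<pi>\<in>Fp. regloss L F M \<pi> \<le> \<Delta>} \<in> sets p"
proof -
  let ?P = "restrict_space (Pi\<^sub>M UNIV (\<lambda>_. borel)) Fp :: ('x \<Rightarrow> real) measure"
  have "{\<pi>\<in>Fp. regloss L F M \<pi> \<le> \<Delta>} = risk L M -` {..(INF g\<in>F. risk L M g) + \<Delta>} \<inter> space ?P"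
    by (auto simp: regloss_def space_restrict_space space_PiM)
  also have "\<dots> \<in> sets ?P"
    by (rule measurable_sets[OF borel_measurable_risk_decision[OF Lm Fp M]]) simp
  finally show ?thesis
    using p by (simp add: decision_dists_def)
qed

lemma countable_prob_space_is_pmf:
  fixes D :: "'a::countable measure"
  assumes D: "prob_space D" and sets_D: "sets D = UNIV"
  shows "\<exists>\<mu>. measure_pmf \<mu> = D"
proof -
  interpret prob_space D
    by (rule D)
  have "AE x in D. measure D {x} \<noteq> 0"
    by (subst AE_support_countable[OF sets_D]) (auto intro!: exI[of _ UNIV])
  then show ?thesis
    using D sets_D Abs_pmf_inverse[of D] by blast
qed

lemma ennreal_inverse_antimono: "(b::ennreal) \<le> a \<Longrightarrow> inverse a \<le> inverse b"
  using ereal_inverse_antimono[of "enn2ereal b" "enn2ereal a"]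
  by (simp add: less_eq_ennreal.rep_eq inverse_ennreal.rep_eq)

lemma regloss_le_expected_distance:
  fixes L :: "real \<Rightarrow> real \<Rightarrow> real"
  assumes Lm: "(\<lambda>z. L (fst z) (snd z)) \<in> borel_measurable (restrict_space borel ({-1..1} \<times> {-1..1}))"
    and Lb: "\<forall>y\<in>{-1..1}. \<forall>y'\<in>{-1..1}. \<bar>L y y'\<bar> \<le> B"
    and Lip: "\<forall>y\<in>{-1..1}. \<forall>a\<in>{-1..1}. \<forall>b\<in>{-1..1}. \<bar>L y a - L y b\<bar> \<le> \<bar>a - b\<bar>"
    and M: "M \<in> models_agnostic"
    and g_min: "g \<in> F" "\<forall>h\<in>F. risk L M g \<le> risk L M h"
    and g: "\<forall>x. g x \<in> {-1..1}" and f: "\<forall>x. f x \<in> {-1..1}"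
  shows "regloss L F M f \<le> (\<integral>z. \<bar>f (fst z) - g (fst z)\<bar> \<partial>M)"
proof -
  interpret prob_space M
    using models_agnosticD(1)[OF M] .
  have "(INF h\<in>F. risk L M h) = risk L M g"
    using g_min by (intro antisym cINF_lower cINF_greatest bdd_belowI[of _ "risk L M g"]) auto
  then have "regloss L F M f = (\<integral>z. L (snd z) (f (fst z)) - L (snd z) (g (fst z)) \<partial>M)"
    unfolding regloss_def risk_def
    by (simp add: integrable_risk[OF Lm Lb f M] integrable_risk[OF Lm Lb g M])
  also have "\<dots> \<le> (\<integral>z. \<bar>f (fst z) - g (fst z)\<bar> \<partial>M)"
  proof (rule integral_mono)
    show "integrable M (\<lambda>z. L (snd z) (f (fst z)) - L (snd z) (g (fst z)))"
      using integrable_risk[OF Lm Lb f M] integrable_risk[OF Lm Lb g M] by simp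
    have "norm \<bar>f x - g x\<bar> \<le> 2" for x
      using f g by (smt (verit) atLeastAtMost_iff real_norm_def)
    then have "AE z in M. norm \<bar>f (fst z) - g (fst z)\<bar> \<le> 2"
      by simp
    moreover have "(\<lambda>z. \<bar>f (fst z) - g (fst z)\<bar>) \<in> borel_measurable M"
      using measurable_compose[OF measurable_fst_models_agnostic[OF M], of "\<lambda>x. \<bar>f x - g x\<bar>" borel]
      by simp
    ultimately show "integrable M (\<lambda>z. \<bar>f (fst z) - g (fst z)\<bar>)"
      by (rule integrable_const_bound)
    fix z assume "z \<in> space M"
    then have "\<bar>L (snd z) (f (fst z)) - L (snd z) (g (fst z))\<bar> \<le> \<bar>f (fst z) - g (fst z)\<bar>"
      using Lip f g by (auto simp: models_agnosticD(3)[OF M])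
    then show "L (snd z) (f (fst z)) - L (snd z) (g (fst z)) \<le> \<bar>f (fst z) - g (fst z)\<bar>"
      by linarith
  qed
  finally show ?thesis .
qed

lemma regloss_sublevel_contains_distance_ball:
  fixes F Fp :: "('x::countable \<Rightarrow> real) set" and L :: "real \<Rightarrow> real \<Rightarrow> real"
  assumes Fp: "Fp \<subseteq> {f. \<forall>x. f x \<in> {-1..1}}" and FFp: "F \<subseteq> Fp"
    and Lm: "(\<lambda>z. L (fst z) (snd z)) \<in> borel_measurable (restrict_space borel ({-1..1} \<times> {-1..1}))"
    and Lb: "\<forall>y\<in>{-1..1}. \<forall>y'\<in>{-1..1}. \<bar>L y y'\<bar> \<le> B"
    and Lip: "\<forall>y\<in>{-1..1}. \<forall>a\<in>{-1..1}. \<forall>b\<in>{-1..1}. \<bar>L y a - L y b\<bar> \<le> \<bar>a - b\<bar>"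
    and ma: "min_attained L F" and M: "M \<in> models_agnostic"
  obtains \<mu> g where "g \<in> F"
    and "{f \<in> Fp. measure_pmf.expectation \<mu> (\<lambda>x. \<bar>f x - g x\<bar>) \<le> \<Delta>}
           \<subseteq> {\<pi> \<in> Fp. regloss L F M \<pi> \<le> \<Delta>}"
proof -
  obtain g where g_min: "g \<in> F" "\<forall>h\<in>F. risk L M g \<le> risk L M h"
    using ma M unfolding min_attained_def by blast
  interpret prob_space M
    using models_agnosticD(1)[OF M] .
  have fst_M: "fst \<in> M \<rightarrow>\<^sub>M count_space UNIV"
    by (rule measurable_fst_models_agnostic[OF M])
  obtain \<mu> :: "'x pmf" where \<mu>: "measure_pmf \<mu> = distr M (count_space UNIV) fst"
    using countable_prob_space_is_pmf[OF prob_space_distr[OF fst_M]] by auto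
  have bound: "regloss L F M f \<le> measure_pmf.expectation \<mu> (\<lambda>x. \<bar>f x - g x\<bar>)" if "f \<in> Fp" for f
    using regloss_le_expected_distance[OF Lm Lb Lip M g_min, of f] g_min(1) that FFp Fp
    by (auto simp: \<mu> integral_distr[OF fst_M])
  show thesis
    using bound by (intro that[where \<mu> = \<mu>, OF g_min(1)]) force
qed

lemma Nfrac_models_agnostic_le_Nfrac_class:
  fixes F Fp :: "('x::countable \<Rightarrow> real) set" and L :: "real \<Rightarrow> real \<Rightarrow> real"
  assumes Fp: "Fp \<subseteq> {f. \<forall>x. f x \<in> {-1..1}}" and FFp: "F \<subseteq> Fp"
    and Lm: "(\<lambda>z. L (fst z) (snd z)) \<in> borel_measurable (restrict_space borel ({-1..1} \<times> {-1..1}))"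
    and Lb: "\<forall>y\<in>{-1..1}. \<forall>y'\<in>{-1..1}. \<bar>L y y'\<bar> \<le> B"
    and Lip: "\<forall>y\<in>{-1..1}. \<forall>a\<in>{-1..1}. \<forall>b\<in>{-1..1}. \<bar>L y a - L y b\<bar> \<le> \<bar>a - b\<bar>"
    and ma: "min_attained L F"
  shows "Nfrac_models L F Fp models_agnostic \<Delta> \<le> Nfrac_class F Fp \<Delta>"
  unfolding Nfrac_models_def Nfrac_class_def
proof (intro INF_superset_mono[OF order_refl] SUP_least)
  fix p and M :: "('x \<times> real) measure" assume p: "p \<in> decision_dists Fp" and M: "M \<in> models_agnostic"
  obtain \<mu> g where g: "g \<in> F"
    and ball: "{f \<in> Fp. measure_pmf.expectation \<mu> (\<lambda>x. \<bar>f x - g x\<bar>) \<le> \<Delta>}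
                 \<subseteq> {\<pi> \<in> Fp. regloss L F M \<pi> \<le> \<Delta>}"
    using regloss_sublevel_contains_distance_ball[OF Fp FFp Lm Lb Lip ma M] .
  have "1 / emeasure p {\<pi> \<in> Fp. regloss L F M \<pi> \<le> \<Delta>}
          \<le> 1 / emeasure p {f \<in> Fp. measure_pmf.expectation \<mu> (\<lambda>x. \<bar>f x - g x\<bar>) \<le> \<Delta>}"
    using emeasure_mono[OF ball regloss_sublevel_in_sets[OF Lm Fp M p]]
    by (simp add: divide_ennreal_def ennreal_inverse_antimono)
  also have "\<dots> \<le> (SUP (\<mu>, fs)\<in>(UNIV :: 'x pmf set) \<times> F.
                     1 / emeasure p {f \<in> Fp. measure_pmf.expectation \<mu> (\<lambda>x. \<bar>f x - fs x\<bar>) \<le> \<Delta>})"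
    using g by (intro SUP_upper2[where i = "(\<mu>, g)"]) auto
  finally show "1 / emeasure p {\<pi> \<in> Fp. regloss L F M \<pi> \<le> \<Delta>} \<le> \<dots>" .
qed

lemma realizable_model_of_pmf:
  fixes \<mu> :: "'x pmf"
  assumes fs: "fs \<in> F" "\<forall>x. fs x \<in> {-1..1}"
  obtains M where "M \<in> models_realizable F"
    and "\<And>g. risk (\<lambda>y y'. \<bar>y - y'\<bar>) M g = measure_pmf.expectation \<mu> (\<lambda>x. \<bar>fs x - g x\<bar>)"
proof
  define h where "h = (\<lambda>x. (x, fs x))"
  have h: "h \<in> measure_pmf \<mu> \<rightarrow>\<^sub>M Zspace"
    using fs(2) by (simp add: measurable_count_space_eq1 h_def space_Zspace
        measurable_cong_sets[of "measure_pmf \<mu>" "count_space UNIV" Zspace Zspace])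
  define M where "M = distr (measure_pmf \<mu>) Zspace h"
  have "M \<in> models_agnostic"
    unfolding models_agnostic_def M_def using measure_pmf.prob_space_distr[OF h] by simp
  moreover have "{z \<in> space Zspace. snd z = fs (fst z)} \<in> sets Zspace"
    using measurable_snd_Zspace measurable_compose[OF measurable_fst_Zspace, of fs borel]
    by measurable
  then have "AE z in M. snd z = fs (fst z)"
    unfolding M_def by (simp add: AE_distr_iff[OF h] h_def)
  ultimately show "M \<in> models_realizable F"
    using fs(1) unfolding models_realizable_def by blast
  show "risk (\<lambda>y y'. \<bar>y - y'\<bar>) M g = measure_pmf.expectation \<mu> (\<lambda>x. \<bar>fs x - g x\<bar>)" for g
  proof -
    have "(\<lambda>z. \<bar>snd z - g (fst z)\<bar>) \<in> borel_measurable Zspace"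
      using measurable_snd_Zspace measurable_compose[OF measurable_fst_Zspace, of g borel]
      by measurable
    then show ?thesis
      unfolding risk_def M_def by (subst integral_distr[OF h]) (auto simp: h_def)
  qed
qed

lemma Nfrac_class_le_Nfrac_models_realizable:
  fixes F Fp :: "('x \<Rightarrow> real) set"
  assumes Fp: "Fp \<subseteq> {f. \<forall>x. f x \<in> {-1..1}}" and FFp: "F \<subseteq> Fp"
  shows "Nfrac_class F Fp \<Delta> \<le> Nfrac_models (\<lambda>y y'. \<bar>y - y'\<bar>) F Fp (models_realizable F) \<Delta>"
  unfolding Nfrac_models_def Nfrac_class_def
proof (intro INF_superset_mono[OF order_refl] SUP_least, clarify)
  fix p and \<mu> :: "'x pmf" and fs assume fs: "fs \<in> F"
  obtain M where M: "M \<in> models_realizable F"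
    and risk_M: "\<And>g. risk (\<lambda>y y'. \<bar>y - y'\<bar>) M g = measure_pmf.expectation \<mu> (\<lambda>x. \<bar>fs x - g x\<bar>)"
    using realizable_model_of_pmf[of fs F] fs FFp Fp by blast
  have "(INF g\<in>F. risk (\<lambda>y y'. \<bar>y - y'\<bar>) M g) = 0"
    using fs by (intro antisym cINF_lower2[OF _ fs] cINF_greatest bdd_belowI[of _ 0])
      (auto simp: risk_M)
  then have "{\<pi> \<in> Fp. regloss (\<lambda>y y'. \<bar>y - y'\<bar>) F M \<pi> \<le> \<Delta>}
               = {f \<in> Fp. measure_pmf.expectation \<mu> (\<lambda>x. \<bar>f x - fs x\<bar>) \<le> \<Delta>}"
    by (simp add: regloss_def risk_M abs_minus_commute)
  then show "1 / emeasure p {f \<in> Fp. measure_pmf.expectation \<mu> (\<lambda>x. \<bar>f x - fs x\<bar>) \<le> \<Delta>}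
       \<le> (SUP M\<in>models_realizable F. 1 / emeasure p {\<pi> \<in> Fp. regloss (\<lambda>y y'. \<bar>y - y'\<bar>) F M \<pi> \<le> \<Delta>})"
    by (intro SUP_upper2[OF M]) simp
qed

lemma Nfrac_models_mono:
  "Ms \<subseteq> Ms' \<Longrightarrow> Nfrac_models L F Fp Ms \<Delta> \<le> Nfrac_models L F Fp Ms' \<Delta>"
  unfolding Nfrac_models_def by (intro INF_superset_mono[OF order_refl] SUP_subset_mono) auto

theorem mainTheorem19:
  fixes F Fp :: "('x::finite \<Rightarrow> real) set"
    and L :: "real \<Rightarrow> real \<Rightarrow> real"
  assumes "Fp \<subseteq> {f. \<forall>x. f x \<in> {-1..1}}"
    and "F \<subseteq> Fp"
    and "\<forall>y\<in>{-1..1}. \<forall>y'\<in>{-1..1}. L y y' \<in> {0..1}"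
    and "\<forall>y\<in>{-1..1}. \<forall>a\<in>{-1..1}. \<forall>b\<in>{-1..1}. \<bar>L y a - L y b\<bar> \<le> \<bar>a - b\<bar>"
    and "(\<lambda>z. L (fst z) (snd z)) \<in> borel_measurable (restrict_space borel ({-1..1} \<times> {-1..1}))"
    and "min_attained L F"
  shows "(\<forall>\<Delta>>0. Nfrac_models L F Fp models_agnostic \<Delta> \<le> Nfrac_class F Fp \<Delta>)
    \<and> (min_attained (\<lambda>y y'. \<bar>y - y'\<bar>) F \<longrightarrow>
        (\<forall>\<Delta>>0. Nfrac_models (\<lambda>y y'. \<bar>y - y'\<bar>) F Fp models_agnostic \<Delta>
                 = Nfrac_models (\<lambda>y y'. \<bar>y - y'\<bar>) F Fp (models_realizable F) \<Delta>
              \<and> Nfrac_models (\<lambda>y y'. \<bar>y - y'\<bar>) F Fp (models_realizable F) \<Delta>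
                 = Nfrac_class F Fp \<Delta>))"
proof (intro conjI allI impI)
  fix \<Delta> :: real
  have "\<forall>y\<in>{-1..1}. \<forall>y'\<in>{-1..1}. \<bar>L y y'\<bar> \<le> 1"
    using assms(3) by auto
  then show "Nfrac_models L F Fp models_agnostic \<Delta> \<le> Nfrac_class F Fp \<Delta>"
    using Nfrac_models_agnostic_le_Nfrac_class assms(1,2,4-6) by blast
next
  fix \<Delta> :: real assume ma: "min_attained (\<lambda>y y'. \<bar>y - y'\<bar>) F"
  have abs_measurable: "(\<lambda>z. \<bar>fst z - snd z\<bar>) \<in> borel_measurable (restrict_space borel ({-1..1::real} \<times> {-1..1}))"
    by (intro measurable_restrict_space1 borel_measurable_continuous_onI continuous_intros)
  have "Nfrac_models (\<lambda>y y'. \<bar>y - y'\<bar>) F Fp models_agnostic \<Delta> \<le> Nfrac_class F Fp \<Delta>"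
    by (rule Nfrac_models_agnostic_le_Nfrac_class[where B = 2, OF assms(1,2) abs_measurable _ _ ma])
      auto
  moreover have "Nfrac_class F Fp \<Delta> \<le> Nfrac_models (\<lambda>y y'. \<bar>y - y'\<bar>) F Fp (models_realizable F) \<Delta>"
    by (rule Nfrac_class_le_Nfrac_models_realizable[OF assms(1,2)])
  moreover have "Nfrac_models (\<lambda>y y'. \<bar>y - y'\<bar>) F Fp (models_realizable F) \<Delta>
                   \<le> Nfrac_models (\<lambda>y y'. \<bar>y - y'\<bar>) F Fp models_agnostic \<Delta>"
    by (rule Nfrac_models_mono) (auto simp: models_realizable_def)
  ultimately show "Nfrac_models (\<lambda>y y'. \<bar>y - y'\<bar>) F Fp models_agnostic \<Delta>
                     = Nfrac_models (\<lambda>y y'. \<bar>y - y'\<bar>) F Fp (models_realizable F) \<Delta>"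
    and "Nfrac_models (\<lambda>y y'. \<bar>y - y'\<bar>) F Fp (models_realizable F) \<Delta> = Nfrac_class F Fp \<Delta>"
    by (meson antisym order_trans)+
qed

end
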